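(* Let $p$ be an odd prime, $\Gamma=\Gamma_0(N)$, $\mathcal O$ the ring of integers of a finite extension of $\mathbb Q_p$, $g\ge0$, and $\varphi\in H^1_c(\Gamma,V_g(\mathcal O))$. Then for every $n\ge1$ and $0\le i\le p-2$, $$\theta_{n,i}\Big(\varphi\big|\begin{pmatrix}p&0\\0&1\end{pmatrix}\Big)=p^g\cdot\nu^n_{n-1}\big(\theta_{n-1,i}(\varphi)\big).$$
   Context: $V_g(R)$: homogeneous degree-$g$ polynomials in $X,Y$ over $R$ with right action $(P|\gamma)(X,Y)=P(dX-cY,-bX+aY)$ for $\gamma=\begin{pmatrix}a&b\\c&d\end{pmatrix}$. $H^1_c(\Gamma',V_g(R))$ is identified with additive maps $\varphi:\mathrm{Div}^0(\mathbb P^1(\mathbb Q))\to V_g(R)$ with $\varphi(\gamma D)|\gamma=\varphi(D)$ for $\gamma\in\Gamma'$. For an integer matrix $\delta$ with positive determinant, $(\varphi|\delta)(D)=\varphi(\delta D)|\delta$ ($\delta$ acting on $\mathbb P^1(\mathbb Q)$ by Möbius transformations); $\varphi|\mathrm{diag}(p,1)$ is a modular symbol of level $\Gamma_0(Np)$. For $n\ge0$, $\mathcal G_n=\mathrm{Gal}(\mathbb Q(\mu_{p^n})/\mathbb Q)\cong(\mathbb Z/p^n)^\times$, $\sigma_a\leftrightarrow a$, $\vartheta_n(\varphi)=\sum_{a\in(\mathbb Z/p^n)^\times}\varphi(\{\infty\}-\{a/p^n\})|_{(X,Y)=(0,1)}\sigma_a$; with $\mathcal G_{n+1}\cong G_n\times(\mathbb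 Z/p)^\times$, $G_n$ cyclic of order $p^n$, $\omega$ Teichmüller, $\theta_{n,i}(\varphi)$ is the image of $\vartheta_{n+1}(\varphi)$ in $\mathcal O[G_n]$ under $(\tau,x)\mapsto\omega(x)^i\tau$. $\nu^n_{n-1}:\mathcal O[G_{n-1}]\to\mathcal O[G_n]$, $\sigma\mapsto\sum_{\tau\mapsto\sigma}\tau$. *)

theory Defs
  imports "HOL-Computational_Algebra.Polynomial" "HOL-Number_Theory.Cong"
begin

datatype cusp = Infty | Fin rat

text \<open>An integer 2x2 matrix (a,b,c,d) stands for [[a,b],[c,d]].\<close>
type_synonym imat = "int \<times> int \<times> int \<times> int"

fun moeb :: "imat \<Rightarrow> cusp \<Rightarrow> cusp" where
  "moeb (a,b,c,d) Infty = (if c = 0 then Infty else Fin (of_int a / of_int c))"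
| "moeb (a,b,c,d) (Fin r) =
     (if of_int c * r + of_int d = 0 then Infty
      else Fin ((of_int a * r + of_int b) / (of_int c * r + of_int d)))"

definition Gamma0 :: "nat \<Rightarrow> imat set" where
  "Gamma0 N = {(a,b,c,d). a * d - b * c = 1 \<and> int N dvd c}"

text \<open>Divisors are finitely supported integer-valued functions on cusps.\<close>
definition is_div0 :: "(cusp \<Rightarrow> int) \<Rightarrow> bool" where
  "is_div0 D \<longleftrightarrow> finite {x. D x \<noteq> 0} \<and> (\<Sum>x\<in>{x. D x \<noteq> 0}. D x) = 0"

definition dpush :: "imat \<Rightarrow> (cusp \<Rightarrow> int) \<Rightarrow> (cusp \<Rightarrow> int)" where
  "dpush \<gamma> D = (\<lambda>x. \<Sum>y\<in>{y. D y \<noteq> 0 \<and> moeb \<gamma> y = x}. D y)"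

definition dv :: "cusp \<Rightarrow> cusp \<Rightarrow> (cusp \<Rightarrow> int)" where
  "dv r s = (\<lambda>x. (if x = r then 1 else 0) - (if x = s then 1 else 0))"

text \<open>A homogeneous polynomial P(X,Y) = sum_j f_j X^j Y^(g-j) of degree g is encoded by
  its dehomogenisation f(t) = P(t,1), a univariate polynomial of degree at most g.
  The right action (P|gamma)(X,Y) = P(dX-cY, -bX+aY) becomes
  sum_j f_j (d t - c)^j (a - b t)^(g-j).\<close>
definition vact :: "nat \<Rightarrow> imat \<Rightarrow> 'a::comm_ring_1 poly \<Rightarrow> 'a poly" where
  "vact g \<gamma> f = (case \<gamma> of (a,b,c,d) \<Rightarrow>
     (\<Sum>j\<le>g. smult (coeff f j) ([:- of_int c, of_int d:] ^ j * [:of_int a, - of_int b:] ^ (g - j))))"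

text \<open>Evaluation at (X,Y) = (0,1) is P(0,1) = f(0).\<close>
definition ev01 :: "'a::comm_ring_1 poly \<Rightarrow> 'a" where
  "ev01 f = poly f 0"

definition modsym :: "nat \<Rightarrow> nat \<Rightarrow> ((cusp \<Rightarrow> int) \<Rightarrow> 'a::comm_ring_1 poly) \<Rightarrow> bool" where
  "modsym N g \<phi> \<longleftrightarrow>
     (\<forall>D. is_div0 D \<longrightarrow> degree (\<phi> D) \<le> g) \<and>
     (\<forall>D1 D2. is_div0 D1 \<longrightarrow> is_div0 D2 \<longrightarrow> \<phi> (\<lambda>x. D1 x + D2 x) = \<phi> D1 + \<phi> D2) \<and>
     (\<forall>\<gamma>\<in>Gamma0 N. \<forall>D. is_div0 D \<longrightarrow> vact g \<gamma> (\<phi> (dpush \<gamma> D)) = \<phi> D)"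

definition mslash :: "nat \<Rightarrow> imat \<Rightarrow> ((cusp \<Rightarrow> int) \<Rightarrow> 'a::comm_ring_1 poly)
                        \<Rightarrow> ((cusp \<Rightarrow> int) \<Rightarrow> 'a poly)" where
  "mslash g \<delta> \<phi> = (\<lambda>D. vact g \<delta> (\<phi> (dpush \<delta> D)))"

text \<open>Elements of R[(Z/p^n)^x] and R[G_n] are coefficient functions on residues (nat \<Rightarrow> R),
  the residue a standing for sigma_a.  G_n is realised as the subgroup
  {t mod p^(n+1) | t = 1 mod p} of (Z/p^(n+1))^x = Gal(Q(mu_(p^(n+1)))/Q(mu_p)).\<close>

definition vartheta :: "nat \<Rightarrow> nat \<Rightarrow> ((cusp \<Rightarrow> int) \<Rightarrow> 'a::comm_ring_1 poly) \<Rightarrow> nat \<Rightarrow> 'a" where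
  "vartheta p n \<phi> a =
     (if a < p ^ n \<and> coprime a (p ^ n)
      then ev01 (\<phi> (dv Infty (Fin (of_nat a / of_nat (p ^ n))))) else 0)"

text \<open>Projection of (Z/p^(n+1))^x = G_n x mu_(p-1) onto G_n (the canonical splitting,
  mu_(p-1) being identified with (Z/p)^x by reduction mod p).\<close>
definition gproj :: "nat \<Rightarrow> nat \<Rightarrow> nat \<Rightarrow> nat" where
  "gproj p n a = (THE t. t < p ^ (n + 1) \<and> t mod p = 1 \<and>
      (\<exists>u. [u ^ (p - 1) = 1] (mod p ^ (n + 1)) \<and> [t * u = a] (mod p ^ (n + 1))))"

definition theta :: "nat \<Rightarrow> nat \<Rightarrow> nat \<Rightarrow> (nat \<Rightarrow> 'a::comm_ring_1)
                      \<Rightarrow> ((cusp \<Rightarrow> int) \<Rightarrow> 'a poly) \<Rightarrow> nat \<Rightarrow> 'a" where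
  "theta p n i \<omega> \<phi> = (\<lambda>t.
     \<Sum>a\<in>{a. a < p ^ (n + 1) \<and> coprime a (p ^ (n + 1)) \<and> gproj p n a = t}.
        vartheta p (n + 1) \<phi> a * \<omega> (a mod p) ^ i)"

text \<open>nu^n_(n-1) : R[G_(n-1)] \<rightarrow> R[G_n], sigma \<mapsto> sum of its preimages under reduction mod p^n.\<close>
definition nu :: "nat \<Rightarrow> nat \<Rightarrow> (nat \<Rightarrow> 'a::comm_ring_1) \<Rightarrow> nat \<Rightarrow> 'a" where
  "nu p n F = (\<lambda>t. if t < p ^ (n + 1) \<and> t mod p = 1 then F (t mod p ^ n) else 0)"

text \<open>Defining properties of the Teichmueller character (Z/p)^x \<rightarrow> R^x
  (in the ring of integers O these determine it uniquely).\<close>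
definition teichmueller :: "nat \<Rightarrow> (nat \<Rightarrow> 'a::comm_ring_1) \<Rightarrow> bool" where
  "teichmueller p \<omega> \<longleftrightarrow>
     (\<forall>x\<in>{1..<p}. \<omega> x ^ (p - 1) = 1 \<and> (\<exists>r. \<omega> x = of_nat x + of_nat p * r)) \<and>
     (\<forall>x\<in>{1..<p}. \<forall>y\<in>{1..<p}. \<omega> ((x * y) mod p) = \<omega> x * \<omega> y)"

end

theory Submission
  imports Defs "HOL-Number_Theory.Number_Theory"
begin

text \<open>Slashing by diag(p,1) moves the cusp a/p^(n+1) to a/p^n and multiplies the value at
  (X,Y) = (0,1) by p^g; invariance under the translations [[1,k],[0,1]] of Gamma_0(N) then gives
  vartheta_(n+1)(phi|diag(p,1))(a) = p^g vartheta_n(phi)(a mod p^n). On the group-ring side, a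
  unit mod p^(n+1) is determined by its component in G_n together with its residue mod p (the Teichmueller part
  is the unique (p-1)-th root of unity with that residue), so reduction mod p^n maps each
  fibre of the projection to G_n bijectively onto a fibre of the projection to G_(n-1);
  summing over fibres yields nu.\<close>

section \<open>Teichmueller lifts modulo prime powers\<close>

lemma cong_pow_prime_lift_int:
  fixes X Y :: int
  assumes "[X = Y] (mod int p ^ (j + 1))"
  shows "[X ^ p = Y ^ p] (mod int p ^ (j + 2))"
proof -
  have diff: "int p ^ (j + 1) dvd X - Y"
    using assms by (simp add: cong_iff_dvd_diff dvd_diff_commute)
  have "[X = Y] (mod int p)"
    using assms by (rule cong_dvd_modulus) simp
  hence "[(\<Sum>i<p. Y ^ (p - Suc i) * X ^ i) = (\<Sum>i<p. Y ^ (p - Suc i) * Y ^ i)] (mod int p)"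
    by (intro cong_sum cong_mult cong_pow cong_refl) auto
  moreover have "(\<Sum>i<p. Y ^ (p - Suc i) * Y ^ i) = int p * Y ^ (p - 1)"
    by (simp add: power_add[symmetric])
  ultimately have "int p dvd (\<Sum>i<p. Y ^ (p - Suc i) * X ^ i)"
    by (metis cong_0_iff cong_mult_self_left cong_trans)
  with diff have "int p ^ (j + 1) * int p dvd (X - Y) * (\<Sum>i<p. Y ^ (p - Suc i) * X ^ i)"
    by (rule mult_dvd_mono)
  hence "int p ^ (j + 2) dvd X ^ p - Y ^ p"
    by (simp add: power_diff_sumr2 ac_simps)
  thus ?thesis
    by (simp add: cong_iff_dvd_diff dvd_diff_commute)
qed

lemma cong_pow_prime_power_lift:
  fixes x y p :: nat
  assumes "[x = y] (mod p)"
  shows "[x ^ (p ^ j) = y ^ (p ^ j)] (mod p ^ (j + 1))"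
proof (induction j)
  case 0
  then show ?case using assms by simp
next
  case (Suc j)
  hence "[int x ^ p ^ j = int y ^ p ^ j] (mod int p ^ (j + 1))"
    by (metis cong_int_iff of_nat_power)
  hence "[(int x ^ p ^ j) ^ p = (int y ^ p ^ j) ^ p] (mod int p ^ (j + 2))"
    by (rule cong_pow_prime_lift_int)
  hence "[int (x ^ p ^ Suc j) = int (y ^ p ^ Suc j)] (mod int (p ^ (Suc j + 1)))"
    by (simp add: power_mult[symmetric] mult.commute)
  thus ?case
    by (simp only: cong_int_iff)
qed

lemma cong_pow_power_self:
  fixes u p k :: nat
  assumes "[u ^ (p - 1) = 1] (mod k)" and "p > 0"
  shows "[u ^ (p ^ j) = u] (mod k)"
proof (induction j)
  case 0
  then show ?case by simp
next
  case (Suc j)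
  have "u ^ (p ^ Suc j) = (u ^ (p ^ j)) ^ p"
    by (simp add: power_mult[symmetric] mult.commute)
  also have "[\<dots> = u ^ p] (mod k)"
    using Suc by (rule cong_pow)
  also have "u ^ p = u * u ^ (p - 1)"
    using assms(2) by (metis power_Suc Suc_diff_1)
  also have "[\<dots> = u * 1] (mod k)"
    using assms(1) by (intro cong_mult cong_refl)
  finally show ?case by simp
qed

lemma teichmueller_lift_unique:
  fixes u v p k :: nat
  assumes "k \<ge> 1" and "p > 0"
    and "[u ^ (p - 1) = 1] (mod p ^ k)" and "[v ^ (p - 1) = 1] (mod p ^ k)"
    and "[u = v] (mod p)"
  shows "[u = v] (mod p ^ k)"
proof -
  have "[u ^ (p ^ (k - 1)) = v ^ (p ^ (k - 1))] (mod p ^ k)"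
    using cong_pow_prime_power_lift[OF assms(5), of "k - 1"] assms(1) by simp
  moreover have "[u ^ (p ^ (k - 1)) = u] (mod p ^ k)" "[v ^ (p ^ (k - 1)) = v] (mod p ^ k)"
    using cong_pow_power_self assms(2-4) by blast+
  ultimately show ?thesis
    by (meson cong_sym cong_trans)
qed

lemma teichmueller_lift_exists:
  fixes a p k :: nat
  assumes "prime p" and "\<not> p dvd a" and "k \<ge> 1"
  shows "\<exists>u. [u ^ (p - 1) = 1] (mod p ^ k) \<and> [u = a] (mod p)"
proof (intro exI conjI)
  have "coprime a (p ^ k)"
    using assms(1,2) by (rule prime_imp_power_coprime_nat)
  hence "[a ^ totient (p ^ k) = 1] (mod p ^ k)"
    by (rule euler_theorem)
  thus "[(a ^ (p ^ (k - 1))) ^ (p - 1) = 1] (mod p ^ k)"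
    using totient_prime_power[of p k] assms by (simp add: power_mult)
  have "[a ^ (p - 1) = 1] (mod p)"
    using fermat_theorem assms by blast
  thus "[a ^ (p ^ (k - 1)) = a] (mod p)"
    using cong_pow_power_self assms prime_gt_0_nat by blast
qed

lemma coprime_prime_power_iff:
  fixes a p :: nat
  assumes "prime p" and "k \<ge> 1"
  shows "coprime a (p ^ k) \<longleftrightarrow> \<not> p dvd a"
proof
  assume coprime: "coprime a (p ^ k)"
  show "\<not> p dvd a"
  proof
    assume "p dvd a"
    moreover have "p dvd p ^ k"
      using assms(2) by (simp add: dvd_power)
    ultimately have "p = 1"
      using coprime by (intro coprime_common_divisor_nat)
    with assms(1) show False by simp
  qed
qed (use assms(1) prime_imp_power_coprime_nat in blast)

section \<open>The projection onto G_m\<close>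

definition gproj_rel :: "nat \<Rightarrow> nat \<Rightarrow> nat \<Rightarrow> nat \<Rightarrow> bool" where
  "gproj_rel p m a t \<longleftrightarrow> t < p ^ (m + 1) \<and> t mod p = 1 \<and>
      (\<exists>u. [u ^ (p - 1) = 1] (mod p ^ (m + 1)) \<and> [t * u = a] (mod p ^ (m + 1)))"

definition gproj_fibre :: "nat \<Rightarrow> nat \<Rightarrow> nat \<Rightarrow> nat set" where
  "gproj_fibre p m t = {a. a < p ^ (m + 1) \<and> coprime a (p ^ (m + 1)) \<and> gproj p m a = t}"

lemma gproj_relE:
  assumes "gproj_rel p m a t"
  obtains u where "[u ^ (p - 1) = 1] (mod p ^ (m + 1))" "[t * u = a] (mod p ^ (m + 1))"
    "[u = a] (mod p)" "t mod p = 1" "t < p ^ (m + 1)"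
proof -
  obtain u where u: "[u ^ (p - 1) = 1] (mod p ^ (m + 1))" "[t * u = a] (mod p ^ (m + 1))"
    and t: "t mod p = 1" "t < p ^ (m + 1)"
    using assms unfolding gproj_rel_def by blast
  have "[t * u = a] (mod p)"
    using u(2) by (rule cong_dvd_modulus_nat) simp
  moreover have "[t * u = 1 * u] (mod p)"
    using t(1) by (intro cong_mult cong_refl) (cases "p = 1"; simp add: cong_def)
  ultimately have "[u = a] (mod p)"
    by (metis cong_sym cong_trans mult_1)
  from u this t show thesis by (rule that)
qed

lemma gproj_rel_exists_residue:
  assumes "prime p" and "t < p ^ (m + 1)" and "t mod p = 1" and "\<not> p dvd b"
  shows "\<exists>a. a < p ^ (m + 1) \<and> [a = b] (mod p) \<and> gproj_rel p m a t"
proof -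
  obtain u where u: "[u ^ (p - 1) = 1] (mod p ^ (m + 1))" "[u = b] (mod p)"
    using teichmueller_lift_exists[OF assms(1,4), of "m + 1"] by auto
  define a where "a = (t * u) mod p ^ (m + 1)"
  have "[a = t * u] (mod p)"
    unfolding a_def cong_def by (simp add: mod_mod_cancel)
  also have "[t * u = 1 * b] (mod p)"
    using assms(3) u(2) by (intro cong_mult) (auto simp: cong_def)
  finally have "[a = b] (mod p)" by simp
  moreover have "gproj_rel p m a t"
    unfolding gproj_rel_def using assms(2,3) u(1) by (auto simp: a_def cong_def)
  moreover have "a < p ^ (m + 1)"
    using assms(1) prime_gt_0_nat by (simp add: a_def)
  ultimately show ?thesis by blast
qed

lemma gproj_rel_exists:
  assumes "prime p" and "\<not> p dvd a"
  shows "\<exists>t. gproj_rel p m a t"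
proof -
  define M where "M = p ^ (m + 1)"
  have p2: "p \<ge> 2"
    using assms prime_ge_2_nat by blast
  have pred: "x * x ^ (p - 2) = x ^ (p - 1)" for x :: nat
    using p2 by (metis power_Suc Suc_diff_Suc Suc_1 le_less_trans lessI diff_Suc_Suc)
  obtain u where u: "[u ^ (p - 1) = 1] (mod M)" "[u = a] (mod p)"
    using teichmueller_lift_exists[OF assms, of "m + 1"] unfolding M_def by auto
  \<comment> \<open>t = a u^(-1), with the inverse of the root of unity u taken as u^(p-2)\<close>
  define t where "t = (a * u ^ (p - 2)) mod M"
  have "t mod p = (a * u ^ (p - 2)) mod p"
    unfolding t_def M_def by (simp add: mod_mod_cancel)
  also have "\<dots> = a ^ (p - 1) mod p"
    using cong_mult[OF cong_refl[of a] cong_pow[OF u(2), of "p - 2"]] pred[of a]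
    by (simp add: cong_def)
  also have "\<dots> = 1"
    using fermat_theorem[OF assms] p2 by (simp add: cong_def)
  finally have "t mod p = 1" .
  moreover have "[t * u = a * u ^ (p - 1)] (mod M)"
  proof -
    have "[t * u = a * u ^ (p - 2) * u] (mod M)"
      unfolding t_def cong_def by (simp add: mod_mult_left_eq)
    thus ?thesis
      by (metis pred mult.assoc mult.commute)
  qed
  moreover have "[a * u ^ (p - 1) = a * 1] (mod M)"
    using u(1) by (intro cong_mult cong_refl)
  moreover have "t < M"
    using p2 by (simp add: t_def M_def)
  ultimately show ?thesis
    unfolding gproj_rel_def M_def using u(1) M_def by (metis cong_trans mult_1_right)
qed

text \<open>Both directions rest on the fact that the (p-1)-th roots of unity attached to a and a'
  agree modulo p, hence modulo p^(m+1), and are units.\<close>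
lemma gproj_rel_cong_iff:
  assumes "prime p" and "gproj_rel p m a t" and "gproj_rel p m a' t'" and "[a = a'] (mod p)"
  shows "[a = a'] (mod p ^ (m + 1)) \<longleftrightarrow> t = t'"
proof -
  define M where "M = p ^ (m + 1)"
  have p2: "p \<ge> 2"
    using assms prime_ge_2_nat by blast
  obtain u where u: "[u ^ (p - 1) = 1] (mod M)" "[t * u = a] (mod M)" "[u = a] (mod p)" "t < M"
    using assms(2) unfolding M_def by (rule gproj_relE)
  obtain u' where u': "[u' ^ (p - 1) = 1] (mod M)" "[t' * u' = a'] (mod M)" "[u' = a'] (mod p)"
    "t' < M"
    using assms(3) unfolding M_def by (rule gproj_relE)
  have "[u = u'] (mod p)"
    using u(3) u'(3) assms(4) by (meson cong_sym cong_trans)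
  hence "[u = u'] (mod M)"
    using teichmueller_lift_unique[of "m + 1" p u u'] u(1) u'(1) p2 unfolding M_def by auto
  hence "[t' * u = t' * u'] (mod M)"
    by (intro cong_mult cong_refl)
  hence a': "[t' * u = a'] (mod M)"
    using u'(2) by (rule cong_trans)
  have "coprime u M"
    using u(1) p2 by (intro lucas_coprime_lemma[of "p - 1"]) auto
  hence "[a = a'] (mod M) \<longleftrightarrow> [t * u = t' * u] (mod M)"
    by (meson u(2) a' cong_sym cong_trans)
  also have "\<dots> \<longleftrightarrow> [t = t'] (mod M)"
    using \<open>coprime u M\<close> by (rule cong_mult_rcancel_nat)
  also have "\<dots> \<longleftrightarrow> t = t'"
    using u(4) u'(4) by (simp add: cong_def)
  finally show ?thesis
    unfolding M_def .
qed

lemma gproj_eq_iff: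
  assumes "prime p" and "\<not> p dvd a"
  shows "gproj p m a = t \<longleftrightarrow> gproj_rel p m a t"
proof -
  have "\<exists>!t. gproj_rel p m a t"
    using gproj_rel_exists[OF assms] gproj_rel_cong_iff[OF assms(1)] by (metis cong_refl)
  moreover have "gproj p m a = (THE t. gproj_rel p m a t)"
    unfolding gproj_def gproj_rel_def ..
  ultimately show ?thesis
    by (metis theI')
qed

lemma gproj_rel_mod:
  assumes "gproj_rel p (Suc m) a t" and "p > 0"
  shows "gproj_rel p m (a mod p ^ (m + 1)) (t mod p ^ (m + 1))"
proof -
  obtain u where u: "[u ^ (p - 1) = 1] (mod p ^ (Suc m + 1))" "[t * u = a] (mod p ^ (Suc m + 1))"
    and t: "t mod p = 1"
    using assms(1) unfolding gproj_rel_def by blast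
  have dvd: "p ^ (m + 1) dvd p ^ (Suc m + 1)"
    by (simp add: le_imp_power_dvd)
  have "[u ^ (p - 1) = 1] (mod p ^ (m + 1))"
    using cong_dvd_modulus_nat[OF u(1) dvd] .
  moreover have "[(t mod p ^ (m + 1)) * u = a mod p ^ (m + 1)] (mod p ^ (m + 1))"
    using cong_dvd_modulus_nat[OF u(2) dvd] by (simp add: cong_def mod_mult_left_eq)
  moreover have "t mod p ^ (m + 1) mod p = 1"
    using t by (simp add: mod_mod_cancel)
  ultimately show ?thesis
    unfolding gproj_rel_def using assms(2) by auto
qed

lemma mem_gproj_fibre_iff:
  assumes "prime p"
  shows "a \<in> gproj_fibre p m t \<longleftrightarrow> a < p ^ (m + 1) \<and> \<not> p dvd a \<and> gproj_rel p m a t"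
proof -
  have "coprime a (p ^ (m + 1)) \<longleftrightarrow> \<not> p dvd a"
    by (rule coprime_prime_power_iff) (use assms in auto)
  thus ?thesis
    unfolding gproj_fibre_def using gproj_eq_iff[OF assms, of a m t] by auto
qed

lemma gproj_fibre_empty:
  assumes "prime p" and "\<not> (t < p ^ (m + 1) \<and> t mod p = 1)"
  shows "gproj_fibre p m t = {}"
  using assms by (auto simp: mem_gproj_fibre_iff[OF assms(1)] gproj_rel_def)

text \<open>An element of a fibre is determined by its residue mod p, and every residue prime to p
  occurs.\<close>
lemma bij_betw_mod_gproj_fibre:
  assumes "prime p" and "t < p ^ (Suc m + 1)" and "t mod p = 1"
  shows "bij_betw (\<lambda>a. a mod p ^ (m + 1))
           (gproj_fibre p (Suc m) t) (gproj_fibre p m (t mod p ^ (m + 1)))"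
proof (rule bij_betw_imageI)
  let ?r = "\<lambda>a. a mod p ^ (m + 1)"
  have p0: "p > 0"
    using assms(1) prime_gt_0_nat by blast
  have mod_p: "a mod p ^ (m + 1) mod p = a mod p" for a
    by (simp add: mod_mod_cancel)
  note fibre_iff = mem_gproj_fibre_iff[OF assms(1)]
  show "inj_on ?r (gproj_fibre p (Suc m) t)"
  proof (rule inj_onI)
    fix a a'
    assume a: "a \<in> gproj_fibre p (Suc m) t" and a': "a' \<in> gproj_fibre p (Suc m) t"
      and eq: "?r a = ?r a'"
    have "[a = a'] (mod p)"
      using eq mod_p unfolding cong_def by metis
    hence "[a = a'] (mod p ^ (Suc m + 1))"
      using gproj_rel_cong_iff[OF assms(1), of "Suc m" a t a' t] a a' by (simp add: fibre_iff)
    thus "a = a'"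
      using a a' by (simp add: fibre_iff cong_def)
  qed
  show "?r ` gproj_fibre p (Suc m) t = gproj_fibre p m (t mod p ^ (m + 1))"
  proof (intro equalityI subsetI)
    fix b
    assume "b \<in> ?r ` gproj_fibre p (Suc m) t"
    then obtain a where a: "a \<in> gproj_fibre p (Suc m) t" and b: "b = ?r a"
      by blast
    hence "\<not> p dvd a" and "gproj_rel p (Suc m) a t"
      by (simp_all add: fibre_iff)
    moreover have "?r a < p ^ (m + 1)"
      using p0 by simp
    ultimately show "b \<in> gproj_fibre p m (t mod p ^ (m + 1))"
      using gproj_rel_mod[OF _ p0] mod_p[of a] by (simp add: b fibre_iff dvd_eq_mod_eq_0)
  next
    fix b
    assume "b \<in> gproj_fibre p m (t mod p ^ (m + 1))"
    hence b: "b < p ^ (m + 1)" "\<not> p dvd b" "gproj_rel p m b (t mod p ^ (m + 1))"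
      by (simp_all add: fibre_iff)
    obtain a where a: "a < p ^ (Suc m + 1)" "[a = b] (mod p)" "gproj_rel p (Suc m) a t"
      using gproj_rel_exists_residue[OF assms b(2)] by blast
    have "\<not> p dvd a"
      using a(2) b(2) by (simp add: cong_def dvd_eq_mod_eq_0)
    hence a_fibre: "a \<in> gproj_fibre p (Suc m) t"
      using a by (simp add: fibre_iff)
    have "[?r a = b] (mod p)"
      using a(2) mod_p unfolding cong_def by metis
    hence "[?r a = b] (mod p ^ (m + 1))"
      using gproj_rel_cong_iff[OF assms(1) gproj_rel_mod[OF a(3) p0] b(3)] by simp
    hence "?r a = b"
      using b(1) by (simp add: cong_def)
    thus "b \<in> ?r ` gproj_fibre p (Suc m) t"
      using a_fibre by blast
  qed
qed

lemma theta_eq_sum_gproj_fibre: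
  "theta p m i \<omega> \<phi> t = (\<Sum>a\<in>gproj_fibre p m t. vartheta p (m + 1) \<phi> a * \<omega> (a mod p) ^ i)"
  unfolding theta_def gproj_fibre_def ..

section \<open>Slashing modular symbols by upper triangular matrices\<close>

lemma dpush_upper_dv_Infty:
  "dpush (a, b, 0, 1) (dv Infty (Fin r)) = dv Infty (Fin (of_int a * r + of_int b))"
proof
  fix x
  have "{y. dv Infty (Fin r) y \<noteq> 0 \<and> moeb (a, b, 0, 1) y = x} =
        (if x = Infty then {Infty} else {}) \<union> (if x = Fin (of_int a * r + of_int b) then {Fin r} else {})"
    by (auto simp: dv_def)
  thus "dpush (a, b, 0, 1) (dv Infty (Fin r)) x = dv Infty (Fin (of_int a * r + of_int b)) x"
    unfolding dpush_def by (cases x) (auto simp: dv_def)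
qed

lemma ev01_vact_upper:
  "ev01 (vact g (a, b, 0, d) f) = of_int a ^ g * ev01 f"
proof -
  have "ev01 (vact g (a, b, 0, d) f) = (\<Sum>j\<le>g. Polynomial.coeff f j * ((0::'a) ^ j * of_int a ^ (g - j)))"
    unfolding ev01_def vact_def by (simp add: poly_sum)
  also have "\<dots> = (\<Sum>j\<in>{0}. Polynomial.coeff f j * ((0::'a) ^ j * of_int a ^ (g - j)))"
    by (intro sum.mono_neutral_right) (auto simp: zero_power)
  finally show ?thesis
    by (simp add: ev01_def poly_0_coeff_0)
qed

lemma is_div0_dv: "is_div0 (dv x y)"
proof -
  have "{z. dv x y z \<noteq> 0} = (if x = y then {} else {x, y})"
    by (auto simp: dv_def)
  thus ?thesis
    unfolding is_div0_def by (simp add: dv_def)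
qed

lemma ev01_modsym_translate:
  assumes "modsym N g \<phi>"
  shows "ev01 (\<phi> (dv Infty (Fin (r + of_int k)))) = ev01 (\<phi> (dv Infty (Fin r)))"
proof -
  have "(1, k, 0, 1) \<in> Gamma0 N"
    by (simp add: Gamma0_def)
  hence "vact g (1, k, 0, 1) (\<phi> (dpush (1, k, 0, 1) (dv Infty (Fin r)))) = \<phi> (dv Infty (Fin r))"
    using assms is_div0_dv unfolding modsym_def by blast
  hence "ev01 (vact g (1, k, 0, 1) (\<phi> (dv Infty (Fin (r + of_int k))))) = ev01 (\<phi> (dv Infty (Fin r)))"
    by (simp add: dpush_upper_dv_Infty add.commute)
  thus ?thesis
    by (simp add: ev01_vact_upper)
qed

lemma vartheta_mslash_diag:
  assumes "modsym N g \<phi>" and "p > 0" and "a < p ^ (n + 1)" and "coprime a (p ^ (n + 1))"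
  shows "vartheta p (n + 1) (mslash g (int p, 0, 0, 1) \<phi>) a
         = of_nat p ^ g * vartheta p n \<phi> (a mod p ^ n)"
proof -
  have "(of_nat a :: rat) = of_nat (a mod p ^ n) + of_nat (p ^ n) * of_nat (a div p ^ n)"
    by (metis mod_mult_div_eq of_nat_add of_nat_mult add.commute)
  hence cusp: "of_int (int p) * (of_nat a / of_nat (p ^ (n + 1))) + of_int 0
               = (of_nat (a mod p ^ n) / of_nat (p ^ n) + of_int (int (a div p ^ n)) :: rat)"
    using assms(2) by (simp add: field_simps)
  have "coprime a (p ^ n)"
    using assms(4) by simp
  hence "coprime (a mod p ^ n) (p ^ n)"
    using assms(2) coprime_mod_left_iff[of "p ^ n" a] by simp
  hence vartheta_n: "vartheta p n \<phi> (a mod p ^ n)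
      = ev01 (\<phi> (dv Infty (Fin (of_nat (a mod p ^ n) / of_nat (p ^ n)))))"
    using assms(2) by (simp add: vartheta_def)
  have "vartheta p (n + 1) (mslash g (int p, 0, 0, 1) \<phi>) a
      = ev01 (mslash g (int p, 0, 0, 1) \<phi> (dv Infty (Fin (of_nat a / of_nat (p ^ (n + 1))))))"
    using assms(3,4) by (simp add: vartheta_def)
  also have "\<dots> = of_nat p ^ g * ev01 (\<phi> (dv Infty
      (Fin (of_nat (a mod p ^ n) / of_nat (p ^ n) + of_int (int (a div p ^ n))))))"
    unfolding mslash_def dpush_upper_dv_Infty ev01_vact_upper cusp by simp
  also have "\<dots> = of_nat p ^ g * vartheta p n \<phi> (a mod p ^ n)"
    unfolding ev01_modsym_translate[OF assms(1)] vartheta_n ..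
  finally show ?thesis .
qed

text \<open>Neither the parity of p, nor N \<ge> 1, nor the choice of \<omega> and i play any role: the
  identity holds summand by summand.\<close>

theorem lemma2p6:
  fixes p N g n i :: nat
    and \<phi> :: "(cusp \<Rightarrow> int) \<Rightarrow> 'a::comm_ring_1 poly"
    and \<omega> :: "nat \<Rightarrow> 'a"
  assumes "prime p" and "odd p" and "N \<ge> 1"
    and "modsym N g \<phi>"
    and "teichmueller p \<omega>"
    and "n \<ge> 1" and "i \<le> p - 2"
  shows "theta p n i \<omega> (mslash g (int p, 0, 0, 1) \<phi>)
         = (\<lambda>t. of_nat p ^ g * nu p n (theta p (n - 1) i \<omega> \<phi>) t)"
proof
  fix t
  obtain m where n: "n = Suc m"
    using assms(6) by (cases n) auto
  have p0: "p > 0"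
    using assms(1) prime_gt_0_nat by blast
  let ?S = "mslash g (int p, 0, 0, 1) \<phi>"
  define H where "H b = of_nat p ^ g * (vartheta p n \<phi> b * \<omega> (b mod p) ^ i)" for b
  have summand: "vartheta p (n + 1) ?S a * \<omega> (a mod p) ^ i = H (a mod p ^ n)"
    if "a \<in> gproj_fibre p n t" for a
    using that vartheta_mslash_diag[OF assms(4) p0] n
    by (simp add: gproj_fibre_def H_def mod_mod_cancel)
  show "theta p n i \<omega> ?S t = of_nat p ^ g * nu p n (theta p (n - 1) i \<omega> \<phi>) t"
  proof (cases "t < p ^ (n + 1) \<and> t mod p = 1")
    case True
    have "theta p n i \<omega> ?S t = (\<Sum>a\<in>gproj_fibre p n t. H (a mod p ^ n))"
      unfolding theta_eq_sum_gproj_fibre using summand by (rule sum.cong[OF refl])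
    also have "\<dots> = (\<Sum>b\<in>gproj_fibre p m (t mod p ^ n). H b)"
    proof (rule sum.reindex_bij_betw)
      show "bij_betw (\<lambda>a. a mod p ^ n) (gproj_fibre p n t) (gproj_fibre p m (t mod p ^ n))"
        using bij_betw_mod_gproj_fibre[OF assms(1), of t m] True unfolding n by simp
    qed
    also have "\<dots> = of_nat p ^ g * theta p m i \<omega> \<phi> (t mod p ^ n)"
      unfolding theta_eq_sum_gproj_fibre H_def n by (simp add: sum_distrib_left)
    finally show ?thesis
      using True by (simp add: nu_def n)
  next
    case False
    then show ?thesis
      using gproj_fibre_empty[OF assms(1) False] by (auto simp: theta_eq_sum_gproj_fibre nu_def)
  qed
qed

end
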